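(* Assume the standing assumptions (i)–(viii) below and let $\delta\in(0,1)$, $T\ge1$. Consider RFedAGS with decaying step sizes $\alpha_{t,k}=\bar\alpha_t$ and batch sizes $B_{t,k}=\bar B_t\in[B_{\mathrm{low}},B_{\mathrm{up}}]$, and let $\tilde K\ge2$ be an integer such that $2-\delta\ge L\bar\alpha_t$ and, for every $K\in\{2,\dots,\tilde K\}$ and every $t$, $1\ge L^2\bar\alpha_t^2M(K+1)(K-2)+\bar\alpha_tLK$ and $1-\delta\ge2L^2\bar\alpha_t^2M$. For $K\in\{1,\dots,\tilde K\}$ define \[ Q_2(K)=\frac{2(F(\tilde x_1)-F(x^* ))}{(K-1+\delta)\sum_{t=1}^T\bar\alpha_t}+\sum_{t=1}^T\frac{\bar\alpha_t^2K\sigma^2L}{(K-1+\delta)\bar B_t\sum_{t=1}^T\bar\alpha_t}\Big(\frac{\bar\alpha_t(2K-1)(K-1)ML}{3}+\frac KS\Big), \] the upper bound on $\mathbb{E}\big[\sum_{t=1}^T\frac{\bar\alpha_t}{\sum_{t=1}^T\bar\alpha_t}\|\mathrm{grad}F(\tilde x_t)\|^2\big]$ obtained when RFedAGS is run with $K$ local steps, and call $K^*\in\arg\min_{K\in\{1,\dots,\tilde K\}}Q_2(K)$ an optimal choice of $K$. If \[ F(\tilde x_1)-F(x^* )>\delta\sigma^2L\sum_{t=1}^T\frac{\bar\alpha_t^2}{\bar B_t}\Big(\bar\alpha_tML+\frac2S\Big), \] then every optimal choice satisfies $K^*>1$.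
   Context: $\mathcal{M}$ is a Riemannian manifold with inner product $\langle\cdot,\cdot\rangle_x$ and norm $\|\cdot\|$ on each tangent space $\mathrm{T}_x\mathcal{M}$; $\mathrm{grad}$ is the Riemannian gradient, $0_x$ the zero of $\mathrm{T}_x\mathcal{M}$. $F(x)=\mathbb{E}_{\xi\sim\mathcal{D}}[f(x;\xi)]$ for a data distribution $\mathcal{D}$; $x^*\in\arg\min_{x\in\mathcal M}F(x)$. $\mathrm{R}$ is a smooth retraction ($\mathrm{R}_x(0_x)=x$, $\mathrm{D}\mathrm{R}_x(0_x)=\mathrm{id}$). A set $\mathcal{W}\subseteq\mathcal{M}$ is totally retractive if there is $r>0$ such that for every $y\in\mathcal{W}$, $\mathcal{W}\subseteq\mathrm{R}_y(\mathbb{B}(0_y,r))$ and $\mathrm{R}_y$ is a diffeomorphism on $\mathbb{B}(0_y,r)$; then $\mathrm{R}_x^{-1}(y)$ is defined for $x,y\in\mathcal{W}$. A vector transport $\Gamma$ associated with $\mathrm{R}$ gives, for $x,y\in\mathcal{W}$, a linear map $\Gamma_x^y:\mathrm{T}_x\mathcal{M}\to\mathrm{T}_y\mathcal{M}$; it is isometric if it preserves inner products. Algorithm RFedAGS (with $S$ agents, $K$ local steps, step sizes $\alpha_{t,k}>0$, batch sizes $B_{t,k}\in\mathbb{N}$, initial point $\tilde x_1$): for $t=1,2,\dots$, for each agent $j$ set $x_{t,0}^j=\tilde x_t$, $\zeta_{t,0}^j=0_{\tilde x_t}$; for $k=1,\dots,K$ agent $j$ draws a mini-batch $\mathcal{B}^j_{t,k-1}$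 of $B_{t,k-1}$ i.i.d. samples $\xi^j_{t,k-1,s}\sim\mathcal{D}$ (independent of all other samples), sets $\eta^j_{k-1}=-\frac{\alpha_{t,k-1}}{B_{t,k-1}}\sum_{s\in\mathcal{B}^j_{t,k-1}}\mathrm{grad}f(x^j_{t,k-1};\xi^j_{t,k-1,s})$, $x^j_{t,k}=\mathrm{R}_{x^j_{t,k-1}}(\eta^j_{k-1})$, $\zeta^j_{t,k}=\zeta^j_{t,k-1}+\Gamma_{x^j_{t,k-1}}^{\tilde x_t}(\eta^j_{k-1})$; then $\tilde x_{t+1}=\mathrm{R}_{\tilde x_t}\big(\frac1S\sum_{j}\zeta^j_{t,K}\big)$. $\mathbb{E}$ denotes total expectation. Standing assumptions: (i) $x^*$, all $\tilde x_t$ and all $x^j_{t,k}$ lie in a compact connected set $\mathcal{W}$ totally retractive w.r.t. $\mathrm{R}$; (ii) each $f(\cdot;\xi)$ is continuously differentiable; (iii) $\Gamma$ is isometric; (iv) $F$ is $L$-retraction-smooth on $\mathcal{W}$ ($F(\mathrm{R}_x(\eta))\le F(x)+\langle\mathrm{grad}F(x),\eta\rangle+\frac L2\|\eta\|^2$ for $x\in\mathcal{W}$, $\mathrm{R}_x(\eta)\in\mathcal{W}$) and $L$-Lipschitz continuously differentiable w.r.t. $\Gamma$ on $\mathcal{W}$ ($\|\Gamma_x^y(\mathrm{grad}F(x))-\mathrm{grad}F(y)\|\le L\|\eta\|$ whenever $x\in\mathcal{W}$, $y=\mathrm{R}_x(\eta)\in\mathcal{W}$); (v) $\alpha_{t,k}\le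 A$ for all $t,k$; (vi) $\mathbb{E}_\xi[\mathrm{grad}f(x;\xi)]=\mathrm{grad}F(x)$; (vii) there is $\sigma>0$ with $\mathbb{E}\|\frac1B\sum_s\mathrm{grad}f(x;\xi_s)-\mathrm{grad}F(x)\|^2\le\sigma^2/B$ for every $x\in\mathcal{W}$ and every mini-batch of $B$ i.i.d. samples; (viii) there is $C_1>0$ with $\|\mathrm{grad}f(x;\xi)\|\le C_1$ for all $x\in\mathcal{W}$ and all $\xi$. Constant $M$: with $P_{x,y}=\mathrm{R}_y^{-1}\circ\mathrm{R}_x$ for $x,y\in\mathcal{W}$, $C_2,C_3>0$ are constants (uniform bounds on the first and second derivatives of $P_{x,y}$ on its compact domain) such that for all $x,y\in\mathcal{W}$ and $\eta\in\mathrm{T}_x\mathcal{M}$ with $\mathrm{R}_x(\eta)\in\mathcal{W}$: $\|\mathrm{D}P_{x,y}(0_x)\|_{\mathrm{op}}\le C_2$ and $\|P_{x,y}(\eta)-P_{x,y}(0_x)-\mathrm{D}P_{x,y}(0_x)[\eta]\|\le C_3\|\eta\|^2$. Then $M=C_2^2+A^2C_1^2C_3^2$. *)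

theory Defs
  imports Complex_Main
begin

definition Q2 ::
  "real \<Rightarrow> real \<Rightarrow> real \<Rightarrow> real \<Rightarrow> real \<Rightarrow> nat \<Rightarrow> nat \<Rightarrow> (nat \<Rightarrow> real) \<Rightarrow> (nat \<Rightarrow> nat) \<Rightarrow> nat \<Rightarrow> real"
where
  "Q2 D \<delta> \<sigma> L M S T \<alpha> B K =
     2 * D / ((real K - 1 + \<delta>) * (\<Sum>t=1..T. \<alpha> t))
     + (\<Sum>t=1..T. (\<alpha> t)^2 * real K * \<sigma>^2 * L
          / ((real K - 1 + \<delta>) * real (B t) * (\<Sum>s=1..T. \<alpha> s))
          * (\<alpha> t * (2 * real K - 1) * (real K - 1) * M * L / 3 + real K / real S))"

end

theory Submission
  imports Defs
begin

text \<open>For K = 1 and K = 2 the cubic correction term of Q2 vanishes or simplifies, and both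
  values are single fractions over the same step-size sum. Comparing them, Q2 2 < Q2 1
  reduces to the gap condition, so K = 1 is never a minimiser over {1..Ktil} once Ktil \<ge> 2.
  The step-size conditions of the theorem only make Q2 a valid bound; the comparison does
  not use them.\<close>

lemma Q2_one:
  "Q2 D \<delta> \<sigma> L M S T \<alpha> B 1 =
     (2 * D + (\<Sum>t=1..T. (\<alpha> t)^2 * \<sigma>^2 * L / (real (B t) * real S)))
       / (\<delta> * (\<Sum>t=1..T. \<alpha> t))"
proof -
  let ?A = "\<Sum>t=1..T. \<alpha> t"
  have summand: "(\<alpha> t)^2 * real 1 * \<sigma>^2 * L / ((real 1 - 1 + \<delta>) * real (B t) * A0)
          * (\<alpha> t * (2 * real 1 - 1) * (real 1 - 1) * M * L / 3 + real 1 / real S)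
        = (\<alpha> t)^2 * \<sigma>^2 * L / (real (B t) * real S) / (\<delta> * A0)"
    for t and A0 :: real
    by simp
  have "Q2 D \<delta> \<sigma> L M S T \<alpha> B 1 = 2 * D / (\<delta> * ?A)
      + (\<Sum>t=1..T. (\<alpha> t)^2 * \<sigma>^2 * L / (real (B t) * real S) / (\<delta> * ?A))"
    unfolding Q2_def summand by simp
  then show ?thesis
    by (simp only: sum_divide_distrib [symmetric] add_divide_distrib)
qed

lemma Q2_two:
  "Q2 D \<delta> \<sigma> L M S T \<alpha> B 2 =
     (2 * D + 2 * (\<sigma>^2 * L * (\<Sum>t=1..T. (\<alpha> t)^2 / real (B t) * (\<alpha> t * M * L + 2 / real S))))
       / ((1 + \<delta>) * (\<Sum>t=1..T. \<alpha> t))"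
proof -
  let ?A = "\<Sum>t=1..T. \<alpha> t"
  have summand: "(\<alpha> t)^2 * real 2 * \<sigma>^2 * L / ((real 2 - 1 + \<delta>) * real (B t) * A0)
          * (\<alpha> t * (2 * real 2 - 1) * (real 2 - 1) * M * L / 3 + real 2 / real S)
        = 2 * (\<sigma>^2 * L * ((\<alpha> t)^2 / real (B t) * (\<alpha> t * M * L + 2 / real S))) / ((1 + \<delta>) * A0)"
    for t and A0 :: real
    by (simp add: field_simps)
  have "Q2 D \<delta> \<sigma> L M S T \<alpha> B 2 = 2 * D / ((1 + \<delta>) * ?A)
      + (\<Sum>t=1..T. 2 * (\<sigma>^2 * L * ((\<alpha> t)^2 / real (B t) * (\<alpha> t * M * L + 2 / real S)))
           / ((1 + \<delta>) * ?A))"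
    unfolding Q2_def summand by simp
  then show ?thesis
    by (simp only: sum_divide_distrib [symmetric] sum_distrib_left [symmetric] add_divide_distrib)
qed

lemma two_fractions_less:
  fixes \<delta> a D X Y :: real
  assumes "0 < \<delta>" "0 < a" "0 \<le> Y" "\<delta> * X < D"
  shows "(2 * D + 2 * X) / ((1 + \<delta>) * a) < (2 * D + Y) / (\<delta> * a)"
proof -
  have "0 \<le> Y * (1 + \<delta>)"
    using assms by simp
  then have "(2 * D + 2 * X) * \<delta> < (2 * D + Y) * (1 + \<delta>)"
    using \<open>\<delta> * X < D\<close> by (simp add: algebra_simps)
  then show ?thesis
    using assms by (simp add: divide_simps)
qed

theorem theorem7:
  fixes F :: "'m \<Rightarrow> real" and x1 xstar :: 'm
    and \<delta> \<sigma> L A C1 C2 C3 M :: real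
    and S T Ktil Blow Bup :: nat
    and \<alpha> :: "nat \<Rightarrow> real" and B :: "nat \<Rightarrow> nat"
  assumes xstar_min: "\<forall>x. F xstar \<le> F x"
    and L_pos: "L > 0" and sigma_pos: "\<sigma> > 0" and S_pos: "S \<ge> 1"
    and C_pos: "C1 > 0" "C2 > 0" "C3 > 0"
    and M_def: "M = C2^2 + A^2 * C1^2 * C3^2"
    and delta: "0 < \<delta>" "\<delta> < 1"
    and T_ge: "T \<ge> 1"
    and alpha_pos: "\<forall>t\<ge>1. \<alpha> t > 0"
    and alpha_le_A: "\<forall>t\<ge>1. \<alpha> t \<le> A"
    and Blow_pos: "Blow \<ge> 1"
    and B_range: "\<forall>t\<ge>1. Blow \<le> B t \<and> B t \<le> Bup"
    and Ktil: "Ktil \<ge> 2"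
    and step1: "\<forall>t\<ge>1. 2 - \<delta> \<ge> L * \<alpha> t"
    and step2: "\<forall>K\<in>{2..Ktil}. \<forall>t\<ge>1.
                  1 \<ge> L^2 * (\<alpha> t)^2 * M * (real K + 1) * (real K - 2) + \<alpha> t * L * real K"
    and step3: "\<forall>t\<ge>1. 1 - \<delta> \<ge> 2 * L^2 * (\<alpha> t)^2 * M"
    and gap: "F x1 - F xstar > \<delta> * \<sigma>^2 * L *
                (\<Sum>t=1..T. (\<alpha> t)^2 / real (B t) * (\<alpha> t * M * L + 2 / real S))"
  shows "\<forall>Kstar. is_arg_min (Q2 (F x1 - F xstar) \<delta> \<sigma> L M S T \<alpha> B)
                   (\<lambda>K. K \<in> {1..Ktil}) Kstar \<longrightarrow> Kstar > 1"
proof -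
  let ?Q = "Q2 (F x1 - F xstar) \<delta> \<sigma> L M S T \<alpha> B"
  have "0 < (\<Sum>t=1..T. \<alpha> t)"
    using T_ge alpha_pos by (intro sum_pos) auto
  moreover have "0 \<le> (\<Sum>t=1..T. (\<alpha> t)^2 * \<sigma>^2 * L / (real (B t) * real S))"
    using L_pos by (intro sum_nonneg) auto
  ultimately have "?Q 2 < ?Q 1"
    unfolding Q2_one Q2_two using delta gap
    by (intro two_fractions_less) (simp_all add: mult.assoc)
  show ?thesis
  proof (intro allI impI)
    fix K
    assume "is_arg_min ?Q (\<lambda>K. K \<in> {1..Ktil}) K"
    then have "1 \<le> K" "?Q K \<le> ?Q 2"
      using Ktil by (auto simp: is_arg_min_linorder)
    with \<open>?Q 2 < ?Q 1\<close> show "K > 1"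
      by (cases "K = 1") auto
  qed
qed

end
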